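(* Consider the following discrete-time individual-based colonisation model. There are $N$ individuals and time-steps $t\in\{0,1,\dots,T\}$ of length $\Delta>0$. Let $\bm{X}=(x_{t,j})$, $t\in\{0,\dots,T\}$, $j\in\{1,\dots,N\}$, with $x_{t,j}\in\{0,1\}$ ($1$ = colonised, $0$ = uncolonised), and write $\bm{x}_{t}=(x_{t,1},\dots,x_{t,N})$. Fix parameters $\bm{\theta}$, a known de-colonisation rate $\gamma>0$, an initial colonisation probability $p_0\in(0,1)$, and colonisation pressures $\lambda_j(t,\bm{x}_{t-1},\bm{\theta})>0$. The prior (transmission) model is: independently for each $j$, $x_{0,j}\sim\mathrm{Bernoulli}(p_0)$, and recursively for $t\ge 1$, $x_{t,j}\mid \bm{\theta},\bm{x}_{t-1}\sim \mathrm{Bernoulli}(1-e^{-\lambda_j(t,\bm{x}_{t-1},\bm{\theta})\Delta})$ if $x_{t-1,j}=0$ and $\sim\mathrm{Bernoulli}(e^{-\gamma\Delta})$ if $x_{t-1,j}=1$; denote its probability mass function by $\pi(\bm{X}\mid\bm{\theta})$. Observations $\bm{Y}=(y_{t,j})$ are given, for the tested pairs $(t,j)$, by independent $y_{t,j}\mid x_{t,j}\sim \mathrm{Bernoulli}(s_e)$ if $x_{t,j}=1$ and $\sim\mathrm{Bernoulli}(1-s_p)$ if $x_{t,j}=0$, with known $s_e,s_p\in[0,1]$; denote the likelihood by $\pi(\bm{Y}\mid\bm{X},\bm{\theta})$, and let $\pi(\bm{X}\mid\bm{\theta},\bm{Y})\propto \pi(\bm{Y}\mid\bm{X},\bm{\theta})\pi(\bm{X}\mid\bm{\theta})$.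 Let $p_{CU}=1-e^{-\gamma\Delta}$. For a matrix $\bm{U}=(u_{t,j})\in(0,1)^{(T+1)\times N}$ define the deterministic map $\bm{X}=f(\bm{U},\bm{\theta})$ by: $x_{0,j}=1$ iff $u_{0,j}<p_0$; and for $t=1,\dots,T$ (in increasing order), if $x_{t-1,j}=0$ then $x_{t,j}=1$ iff $u_{t,j}<1-e^{-\lambda_j(t,\bm{x}_{t-1},\bm{\theta})\Delta}$, while if $x_{t-1,j}=1$ then $x_{t,j}=0$ iff $u_{t,j}<p_{CU}$. For a state $\bm{X}$ define bounds $(a_{t,j},b_{t,j})$ by: $(0,p_0)$ if $x_{0,j}=1$ and $(p_0,1)$ if $x_{0,j}=0$ (for $t=0$); and for $t\ge1$, with $p_{UC}=1-e^{-\lambda_j(t,\bm{x}_{t-1},\bm{\theta})\Delta}$: $(0,p_{UC})$ if $(x_{t-1,j},x_{t,j})=(0,1)$, $(p_{UC},1)$ if $(0,0)$, $(0,p_{CU})$ if $(1,0)$, $(p_{CU},1)$ if $(1,1)$. The latent-variable proposal from the current state $\bm{X}$ is: (Step 1) sample $\bm{U}$ with independent entries $u_{t,j}\sim\mathrm{Unif}(a_{t,j},b_{t,j})$, bounds computed from $\bm{X}$; denote this density by $q(\bm{U}\mid\bm{\theta},\bm{X})$. (Step 2) choose one pair $(t',j')$ with probability $(1+a_{t',j'}-b_{t',j'})/\sum_{t=0}^T\sum_{j=1}^N(1+a_{t,j}-b_{t,j})$, sample $u^\ast_{t',j'}\sim\mathrm{Unif}\big((0,1)\setminus(a_{t',j'},b_{t',j'})\big)$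 and set $u^\ast_{t,j}=u_{t,j}$ for all other $(t,j)$; denote the density of this step by $q(\bm{U}^\ast\mid\bm{\theta},\bm{U})$ (bounds computed from $f(\bm{U},\bm{\theta})$). (Step 3) set $\bm{X}^\ast=f(\bm{U}^\ast,\bm{\theta})$; denote by $q(\bm{X}^\ast\mid\bm{\theta},\bm{U}^\ast)$ the (degenerate) distribution of this step, equal to $1$ if $\bm{X}^\ast=f(\bm{U}^\ast,\bm{\theta})$ and $0$ otherwise. The reverse move uses the same three steps from $\bm{X}^\ast$, i.e. the densities $q(\bm{U}^\ast\mid\bm{\theta},\bm{X}^\ast)$, $q(\bm{U}\mid\bm{\theta},\bm{U}^\ast)$, $q(\bm{X}\mid\bm{\theta},\bm{U})$. Then the Metropolis–Hastings acceptance probability of $\bm{X}^\ast$, \[ \alpha(\bm{X},\bm{X}^\ast)=\min\left\{1,\frac{\pi(\bm{X}^\ast\mid\bm{\theta},\bm{Y})}{\pi(\bm{X}\mid\bm{\theta},\bm{Y})}\cdot\frac{q(\bm{U}^\ast\mid\bm{\theta},\bm{X}^\ast)\,q(\bm{U}\mid\bm{\theta},\bm{U}^\ast)\,q(\bm{X}\mid\bm{\theta},\bm{U})}{q(\bm{U}\mid\bm{\theta},\bm{X})\,q(\bm{U}^\ast\mid\bm{\theta},\bm{U})\,q(\bm{X}^\ast\mid\bm{\theta},\bm{U}^\ast)}\right\}, \] simplifies to \[ \alpha(\bm{X},\bm{X}^\ast)=\min\left\{1,\frac{\pi(\bm{Y}\mid\bm{X}^\ast,\bm{\theta})}{\pi(\bm{Y}\mid\bm{X},\bm{\theta})}\cdot\frac{q(\bm{U}\mid\bm{\theta},\bm{U}^\ast)}{q(\bm{U}^\ast\mid\bm{\theta},\bm{U})}\right\}.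 \]
   Context: This is the latent-variable update ("Rippler" algorithm) within a Metropolis-within-Gibbs sampler targeting $\pi(\bm{\theta},\bm{X}\mid\bm{Y})$; the parameters $\bm{\theta}$ are held fixed during this update. The acceptance probability $\alpha(\bm{X},\bm{X}^\ast)$ is the usual Metropolis–Hastings ratio $\min\{1,\pi(\bm{X}^\ast\mid\bm{\theta},\bm{Y})q(\bm{X}\mid\bm{\theta},\bm{X}^\ast)/(\pi(\bm{X}\mid\bm{\theta},\bm{Y})q(\bm{X}^\ast\mid\bm{\theta},\bm{X}))\}$, where the forward proposal density is taken to be the product of the three step densities $q(\bm{U}\mid\bm{\theta},\bm{X})q(\bm{U}^\ast\mid\bm{\theta},\bm{U})q(\bm{X}^\ast\mid\bm{\theta},\bm{U}^\ast)$ and the reverse proposal density is $q(\bm{U}^\ast\mid\bm{\theta},\bm{X}^\ast)q(\bm{U}\mid\bm{\theta},\bm{U}^\ast)q(\bm{X}\mid\bm{\theta},\bm{U})$. *)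

theory Defs
  imports Complex_Main
begin

text \<open>States X are functions (time t, individual j) to bool; the relevant domain is
  t \<in> {0..T}, j \<in> {0..<N}.  The fixed parameter theta has an arbitrary type 'p;
  the colonisation pressure is lam j t xprev theta, where xprev is the previous row.\<close>

definition states :: "nat \<Rightarrow> nat \<Rightarrow> (nat \<Rightarrow> nat \<Rightarrow> bool) set" where
  "states T N = {X. \<forall>t j. X t j \<longrightarrow> t \<le> T \<and> j < N}"

definition pCU :: "real \<Rightarrow> real \<Rightarrow> real" where
  "pCU \<gamma> \<Delta> = 1 - exp (- \<gamma> * \<Delta>)"

definition pUC :: "(nat \<Rightarrow> nat \<Rightarrow> (nat \<Rightarrow> bool) \<Rightarrow> 'p \<Rightarrow> real) \<Rightarrow> 'p \<Rightarrow> real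
    \<Rightarrow> nat \<Rightarrow> nat \<Rightarrow> (nat \<Rightarrow> bool) \<Rightarrow> real" where
  "pUC lam \<theta> \<Delta> j t xprev = 1 - exp (- lam j t xprev \<theta> * \<Delta>)"

definition prior :: "nat \<Rightarrow> nat \<Rightarrow> real \<Rightarrow> real \<Rightarrow> real
    \<Rightarrow> (nat \<Rightarrow> nat \<Rightarrow> (nat \<Rightarrow> bool) \<Rightarrow> 'p \<Rightarrow> real) \<Rightarrow> 'p
    \<Rightarrow> (nat \<Rightarrow> nat \<Rightarrow> bool) \<Rightarrow> real" where
  "prior T N \<Delta> \<gamma> p0 lam \<theta> X =
     (\<Prod>j<N. (if X 0 j then p0 else 1 - p0)) *
     (\<Prod>t\<in>{1..T}. \<Prod>j<N.
        (if \<not> X (t - 1) j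
         then (if X t j then pUC lam \<theta> \<Delta> j t (X (t - 1)) else 1 - pUC lam \<theta> \<Delta> j t (X (t - 1)))
         else (if X t j then exp (- \<gamma> * \<Delta>) else 1 - exp (- \<gamma> * \<Delta>))))"

definition lik :: "(nat \<times> nat) set \<Rightarrow> real \<Rightarrow> real \<Rightarrow> (nat \<Rightarrow> nat \<Rightarrow> bool)
    \<Rightarrow> (nat \<Rightarrow> nat \<Rightarrow> bool) \<Rightarrow> real" where
  "lik S se sp Y X =
     (\<Prod>(t, j)\<in>S. (if X t j then (if Y t j then se else 1 - se)
                            else (if Y t j then 1 - sp else sp)))"

definition posterior :: "nat \<Rightarrow> nat \<Rightarrow> real \<Rightarrow> real \<Rightarrow> real
    \<Rightarrow> (nat \<Rightarrow> nat \<Rightarrow> (nat \<Rightarrow> bool) \<Rightarrow> 'p \<Rightarrow> real) \<Rightarrow> 'p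
    \<Rightarrow> (nat \<times> nat) set \<Rightarrow> real \<Rightarrow> real \<Rightarrow> (nat \<Rightarrow> nat \<Rightarrow> bool)
    \<Rightarrow> (nat \<Rightarrow> nat \<Rightarrow> bool) \<Rightarrow> real" where
  "posterior T N \<Delta> \<gamma> p0 lam \<theta> S se sp Y X =
     lik S se sp Y X * prior T N \<Delta> \<gamma> p0 lam \<theta> X /
     (\<Sum>X'\<in>states T N. lik S se sp Y X' * prior T N \<Delta> \<gamma> p0 lam \<theta> X')"

primrec frow :: "nat \<Rightarrow> real \<Rightarrow> real \<Rightarrow> real
    \<Rightarrow> (nat \<Rightarrow> nat \<Rightarrow> (nat \<Rightarrow> bool) \<Rightarrow> 'p \<Rightarrow> real) \<Rightarrow> 'p
    \<Rightarrow> (nat \<Rightarrow> nat \<Rightarrow> real) \<Rightarrow> nat \<Rightarrow> (nat \<Rightarrow> bool)" where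
  "frow N \<Delta> \<gamma> p0 lam \<theta> U 0 = (\<lambda>j. j < N \<and> U 0 j < p0)"
| "frow N \<Delta> \<gamma> p0 lam \<theta> U (Suc t) =
     (\<lambda>j. j < N \<and>
        (if \<not> frow N \<Delta> \<gamma> p0 lam \<theta> U t j
         then U (Suc t) j < pUC lam \<theta> \<Delta> j (Suc t) (frow N \<Delta> \<gamma> p0 lam \<theta> U t)
         else \<not> (U (Suc t) j < pCU \<gamma> \<Delta>)))"

definition fmap :: "nat \<Rightarrow> nat \<Rightarrow> real \<Rightarrow> real \<Rightarrow> real
    \<Rightarrow> (nat \<Rightarrow> nat \<Rightarrow> (nat \<Rightarrow> bool) \<Rightarrow> 'p \<Rightarrow> real) \<Rightarrow> 'p
    \<Rightarrow> (nat \<Rightarrow> nat \<Rightarrow> real) \<Rightarrow> (nat \<Rightarrow> nat \<Rightarrow> bool)" where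
  "fmap T N \<Delta> \<gamma> p0 lam \<theta> U = (\<lambda>t j. t \<le> T \<and> frow N \<Delta> \<gamma> p0 lam \<theta> U t j)"

definition bounds :: "real \<Rightarrow> real \<Rightarrow> real
    \<Rightarrow> (nat \<Rightarrow> nat \<Rightarrow> (nat \<Rightarrow> bool) \<Rightarrow> 'p \<Rightarrow> real) \<Rightarrow> 'p
    \<Rightarrow> (nat \<Rightarrow> nat \<Rightarrow> bool) \<Rightarrow> nat \<Rightarrow> nat \<Rightarrow> real \<times> real" where
  "bounds \<Delta> \<gamma> p0 lam \<theta> X t j =
     (if t = 0 then (if X 0 j then (0, p0) else (p0, 1))
      else (let pu = pUC lam \<theta> \<Delta> j t (X (t - 1)); pc = pCU \<gamma> \<Delta> in
            if \<not> X (t - 1) j then (if X t j then (0, pu) else (pu, 1))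
            else (if \<not> X t j then (0, pc) else (pc, 1))))"

text \<open>Convention (a version of the
  uniform density that agrees with the strict inequalities in f): the lower interval (0,p) is
  open, the upper interval (p,1) is taken as [p,1).  This only changes densities on null sets.\<close>
definition in_box :: "real \<times> real \<Rightarrow> real \<Rightarrow> bool" where
  "in_box ab u = (0 < u \<and> fst ab \<le> u \<and> u < snd ab)"

definition q1 :: "nat \<Rightarrow> nat \<Rightarrow> real \<Rightarrow> real \<Rightarrow> real
    \<Rightarrow> (nat \<Rightarrow> nat \<Rightarrow> (nat \<Rightarrow> bool) \<Rightarrow> 'p \<Rightarrow> real) \<Rightarrow> 'p
    \<Rightarrow> (nat \<Rightarrow> nat \<Rightarrow> bool) \<Rightarrow> (nat \<Rightarrow> nat \<Rightarrow> real) \<Rightarrow> real" where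
  "q1 T N \<Delta> \<gamma> p0 lam \<theta> X U =
     (\<Prod>t\<le>T. \<Prod>j<N. (let (a, b) = bounds \<Delta> \<gamma> p0 lam \<theta> X t j in
                        if in_box (a, b) (U t j) then 1 / (b - a) else 0))"

text \<open>Step 2 density q(U' | theta, U): mixture over the chosen pair (t,j), chosen with
  probability (1 + a - b)/sum, of a uniform draw on (0,1) minus the box of that entry,
  all other entries kept (density w.r.t. Lebesgue measure in the changed coordinate).\<close>
definition q2 :: "nat \<Rightarrow> nat \<Rightarrow> real \<Rightarrow> real \<Rightarrow> real
    \<Rightarrow> (nat \<Rightarrow> nat \<Rightarrow> (nat \<Rightarrow> bool) \<Rightarrow> 'p \<Rightarrow> real) \<Rightarrow> 'p
    \<Rightarrow> (nat \<Rightarrow> nat \<Rightarrow> real) \<Rightarrow> (nat \<Rightarrow> nat \<Rightarrow> real) \<Rightarrow> real" where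
  "q2 T N \<Delta> \<gamma> p0 lam \<theta> U U' =
     (let X = fmap T N \<Delta> \<gamma> p0 lam \<theta> U;
          w = (\<lambda>t j. 1 + fst (bounds \<Delta> \<gamma> p0 lam \<theta> X t j) - snd (bounds \<Delta> \<gamma> p0 lam \<theta> X t j));
          Z = (\<Sum>t\<le>T. \<Sum>j<N. w t j)
      in (\<Sum>t\<le>T. \<Sum>j<N. (w t j / Z) *
            (if (\<forall>t''\<le>T. \<forall>j''<N. (t'', j'') \<noteq> (t, j) \<longrightarrow> U' t'' j'' = U t'' j'') \<and>
                0 < U' t j \<and> U' t j < 1 \<and>
                \<not> in_box (bounds \<Delta> \<gamma> p0 lam \<theta> X t j) (U' t j)
             then 1 / w t j else 0)))"

definition q3 :: "nat \<Rightarrow> nat \<Rightarrow> real \<Rightarrow> real \<Rightarrow> real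
    \<Rightarrow> (nat \<Rightarrow> nat \<Rightarrow> (nat \<Rightarrow> bool) \<Rightarrow> 'p \<Rightarrow> real) \<Rightarrow> 'p
    \<Rightarrow> (nat \<Rightarrow> nat \<Rightarrow> real) \<Rightarrow> (nat \<Rightarrow> nat \<Rightarrow> bool) \<Rightarrow> real" where
  "q3 T N \<Delta> \<gamma> p0 lam \<theta> U X = (if X = fmap T N \<Delta> \<gamma> p0 lam \<theta> U then 1 else 0)"

end

theory Submission
  imports Defs
begin

text \<open>The bounds are chosen so that the box of a state X is exactly the set of U in the unit
  cube with f(U) = X, and the side lengths b - a of that box are the transition probabilities
  of the prior.  Hence both Step 3 factors equal 1 and q(U | theta, X) = 1 / pi(X | theta) on
  its support, so the priors in the posterior ratio cancel against the Step 1 densities, and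
  the normalising constant of the posterior cancels as well.\<close>

lemma prior_eq_prod_box_length:
  "prior T N \<Delta> \<gamma> p0 lam \<theta> X =
     (\<Prod>t\<le>T. \<Prod>j<N. snd (bounds \<Delta> \<gamma> p0 lam \<theta> X t j) - fst (bounds \<Delta> \<gamma> p0 lam \<theta> X t j))"
proof -
  let ?len = "\<lambda>t j. snd (bounds \<Delta> \<gamma> p0 lam \<theta> X t j) - fst (bounds \<Delta> \<gamma> p0 lam \<theta> X t j)"
  have "{..T} = insert 0 {1..T}" by auto
  then have "(\<Prod>t\<le>T. \<Prod>j<N. ?len t j) = (\<Prod>j<N. ?len 0 j) * (\<Prod>t\<in>{1..T}. \<Prod>j<N. ?len t j)"
    by simp
  also have "\<dots> = prior T N \<Delta> \<gamma> p0 lam \<theta> X"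
    unfolding prior_def
    by (intro arg_cong2[where f = "(*)"] prod.cong refl) (auto simp: bounds_def Let_def pCU_def)
  finally show ?thesis ..
qed

lemma q1_pos_imp_in_box:
  assumes "q1 T N \<Delta> \<gamma> p0 lam \<theta> X U > 0" and "t \<le> T" and "j < N"
  shows "in_box (bounds \<Delta> \<gamma> p0 lam \<theta> X t j) (U t j)"
proof (rule ccontr)
  assume "\<not> ?thesis"
  with \<open>t \<le> T\<close> \<open>j < N\<close> have "q1 T N \<Delta> \<gamma> p0 lam \<theta> X U = 0"
    unfolding q1_def by (subst prod_zero_iff; force simp: prod_zero_iff case_prod_beta)
  with assms(1) show False by simp
qed

lemma q1_eq_inverse_prior:
  assumes "\<And>t j. t \<le> T \<Longrightarrow> j < N \<Longrightarrow> in_box (bounds \<Delta> \<gamma> p0 lam \<theta> X t j) (U t j)"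
  shows "q1 T N \<Delta> \<gamma> p0 lam \<theta> X U = 1 / prior T N \<Delta> \<gamma> p0 lam \<theta> X"
proof -
  have "q1 T N \<Delta> \<gamma> p0 lam \<theta> X U = (\<Prod>t\<le>T. \<Prod>j<N.
      1 / (snd (bounds \<Delta> \<gamma> p0 lam \<theta> X t j) - fst (bounds \<Delta> \<gamma> p0 lam \<theta> X t j)))"
    unfolding q1_def using assms by (intro prod.cong refl) (simp add: case_prod_beta)
  then show ?thesis
    unfolding prior_eq_prod_box_length by (simp add: prod_dividef)
qed

lemma fmap_in_box:
  assumes "t \<le> T" and "j < N" and "0 < U t j" and "U t j < 1"
  shows "in_box (bounds \<Delta> \<gamma> p0 lam \<theta> (fmap T N \<Delta> \<gamma> p0 lam \<theta> U) t j) (U t j)"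
proof (cases t)
  case 0
  with assms show ?thesis by (auto simp: bounds_def fmap_def in_box_def)
next
  case (Suc s)
  with assms have "fmap T N \<Delta> \<gamma> p0 lam \<theta> U s = frow N \<Delta> \<gamma> p0 lam \<theta> U s"
    and "fmap T N \<Delta> \<gamma> p0 lam \<theta> U t = frow N \<Delta> \<gamma> p0 lam \<theta> U t"
    by (auto simp: fmap_def)
  with assms Suc show ?thesis
    by (auto simp: bounds_def Let_def in_box_def)
qed

lemma fmap_eq_if_in_box:
  assumes "X \<in> states T N"
    and box: "\<And>t j. t \<le> T \<Longrightarrow> j < N \<Longrightarrow> in_box (bounds \<Delta> \<gamma> p0 lam \<theta> X t j) (U t j)"
  shows "fmap T N \<Delta> \<gamma> p0 lam \<theta> U = X"
proof -
  have support: "X t j \<Longrightarrow> t \<le> T \<and> j < N" for t j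
    using assms(1) by (auto simp: states_def)
  have "X t = frow N \<Delta> \<gamma> p0 lam \<theta> U t" if "t \<le> T" for t
    using that
  proof (induction t)
    case 0
    show ?case
    proof
      fix j
      show "X 0 j = frow N \<Delta> \<gamma> p0 lam \<theta> U 0 j"
        using support[of 0 j] box[of 0 j]
        by (cases "j < N") (auto simp: bounds_def in_box_def split: if_splits)
    qed
  next
    case (Suc t)
    then have IH: "X t = frow N \<Delta> \<gamma> p0 lam \<theta> U t" by simp
    show ?case
    proof
      fix j
      show "X (Suc t) j = frow N \<Delta> \<gamma> p0 lam \<theta> U (Suc t) j"
        using support[of "Suc t" j] box[of "Suc t" j] Suc.prems
        by (cases "j < N") (auto simp: bounds_def in_box_def Let_def IH[symmetric] split: if_splits)
    qed
  qed
  with support show ?thesis by (auto simp: fmap_def fun_eq_iff)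
qed

lemma double_sum_nonzero_imp_nonzero_term:
  fixes f :: "nat \<Rightarrow> nat \<Rightarrow> 'a::comm_monoid_add"
  assumes "(\<Sum>t\<le>T. \<Sum>j<N. f t j) \<noteq> 0"
  shows "\<exists>t\<le>T. \<exists>j<N. f t j \<noteq> 0"
  using assms by (meson atMost_iff lessThan_iff sum.not_neutral_contains_not_neutral)

lemma q2_nonzero_imp_single_change:
  assumes "q2 T N \<Delta> \<gamma> p0 lam \<theta> U U' \<noteq> 0"
  obtains t0 j0 where "t0 \<le> T" "j0 < N" "0 < U' t0 j0" "U' t0 j0 < 1"
    "\<And>t j. t \<le> T \<Longrightarrow> j < N \<Longrightarrow> (t, j) \<noteq> (t0, j0) \<Longrightarrow> U' t j = U t j"
proof -
  from assms have "\<exists>t0\<le>T. \<exists>j0<N.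
      (\<forall>t\<le>T. \<forall>j<N. (t, j) \<noteq> (t0, j0) \<longrightarrow> U' t j = U t j) \<and> 0 < U' t0 j0 \<and> U' t0 j0 < 1"
    unfolding q2_def Let_def
    by (auto dest!: double_sum_nonzero_imp_nonzero_term split: if_splits) blast
  with that show thesis by blast
qed

lemma q2_nonzero_imp_unit_interval:
  assumes "q2 T N \<Delta> \<gamma> p0 lam \<theta> U U' \<noteq> 0"
    and unit_U: "\<And>t j. t \<le> T \<Longrightarrow> j < N \<Longrightarrow> 0 < U t j \<and> U t j < 1"
    and "t \<le> T" and "j < N"
  shows "0 < U' t j \<and> U' t j < 1"
proof -
  from assms(1) obtain t0 j0 where "0 < U' t0 j0" "U' t0 j0 < 1"
      and unchanged: "\<And>t j. t \<le> T \<Longrightarrow> j < N \<Longrightarrow> (t, j) \<noteq> (t0, j0) \<Longrightarrow> U' t j = U t j"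
    by (rule q2_nonzero_imp_single_change) (rule that)
  show ?thesis
  proof (cases "(t, j) = (t0, j0)")
    case True
    with \<open>0 < U' t0 j0\<close> \<open>U' t0 j0 < 1\<close> show ?thesis by simp
  next
    case False
    with unit_U[OF \<open>t \<le> T\<close> \<open>j < N\<close>] unchanged[OF \<open>t \<le> T\<close> \<open>j < N\<close>] show ?thesis
      by simp
  qed
qed

lemma posterior_divide_posterior:
  assumes "posterior T N \<Delta> \<gamma> p0 lam \<theta> S se sp Y X > 0"
  shows "posterior T N \<Delta> \<gamma> p0 lam \<theta> S se sp Y X' / posterior T N \<Delta> \<gamma> p0 lam \<theta> S se sp Y X
    = lik S se sp Y X' * prior T N \<Delta> \<gamma> p0 lam \<theta> X' / (lik S se sp Y X * prior T N \<Delta> \<gamma> p0 lam \<theta> X)"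
  using assms unfolding posterior_def by (cases "lik S se sp Y X * prior T N \<Delta> \<gamma> p0 lam \<theta> X = 0") auto

locale colonisation_model =
  fixes \<Delta> \<gamma> p0 :: real and lam :: "nat \<Rightarrow> nat \<Rightarrow> (nat \<Rightarrow> bool) \<Rightarrow> 'p \<Rightarrow> real" and \<theta> :: 'p
  assumes step_pos: "\<Delta> > 0" and decolonisation_pos: "\<gamma> > 0"
    and p0_pos: "0 < p0" and p0_less_1: "p0 < 1"
    and lam_pos: "\<And>j t x. lam j t x \<theta> > 0"
begin

lemma pUC_pos: "0 < pUC lam \<theta> \<Delta> j t x" and pUC_less_1: "pUC lam \<theta> \<Delta> j t x < 1"
  using mult_pos_pos[OF lam_pos step_pos] by (auto simp: pUC_def)

lemma pCU_pos: "0 < pCU \<gamma> \<Delta>" and pCU_less_1: "pCU \<gamma> \<Delta> < 1"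
  using mult_pos_pos[OF decolonisation_pos step_pos] by (auto simp: pCU_def)

lemma bounds_fst_less_snd: "fst (bounds \<Delta> \<gamma> p0 lam \<theta> X t j) < snd (bounds \<Delta> \<gamma> p0 lam \<theta> X t j)"
  and bounds_snd_le_1: "snd (bounds \<Delta> \<gamma> p0 lam \<theta> X t j) \<le> 1"
  using pUC_pos[of j t "X (t - 1)"] pUC_less_1[of j t "X (t - 1)"] pCU_pos pCU_less_1 p0_pos p0_less_1
  by (auto simp: bounds_def Let_def)

lemma in_box_imp_unit_interval:
  assumes "in_box (bounds \<Delta> \<gamma> p0 lam \<theta> X t j) u"
  shows "0 < u" and "u < 1"
  using assms bounds_snd_le_1[of X t j] by (auto simp: in_box_def)

lemma prior_pos: "prior T N \<Delta> \<gamma> p0 lam \<theta> X > 0"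
  unfolding prior_eq_prod_box_length using bounds_fst_less_snd by (auto intro!: prod_pos)

end

theorem proposition1:
  fixes T N :: nat and \<Delta> \<gamma> p0 se sp :: real
    and lam :: "nat \<Rightarrow> nat \<Rightarrow> (nat \<Rightarrow> bool) \<Rightarrow> 'p \<Rightarrow> real" and \<theta> :: 'p
    and S :: "(nat \<times> nat) set" and Y :: "nat \<Rightarrow> nat \<Rightarrow> bool"
    and X Xs :: "nat \<Rightarrow> nat \<Rightarrow> bool" and U Us :: "nat \<Rightarrow> nat \<Rightarrow> real"
  assumes "\<Delta> > 0" and "\<gamma> > 0" and "0 < p0" and "p0 < 1"
    and "\<And>j t x. lam j t x \<theta> > 0"
    and "0 \<le> se" and "se \<le> 1" and "0 \<le> sp" and "sp \<le> 1"
    and "S \<subseteq> {..T} \<times> {..<N}"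
    and "X \<in> states T N"
    and "posterior T N \<Delta> \<gamma> p0 lam \<theta> S se sp Y X > 0"
    and "q1 T N \<Delta> \<gamma> p0 lam \<theta> X U > 0"
    and "q2 T N \<Delta> \<gamma> p0 lam \<theta> U Us > 0"
    and "Xs = fmap T N \<Delta> \<gamma> p0 lam \<theta> Us"
  shows "min 1 (posterior T N \<Delta> \<gamma> p0 lam \<theta> S se sp Y Xs / posterior T N \<Delta> \<gamma> p0 lam \<theta> S se sp Y X *
            ((q1 T N \<Delta> \<gamma> p0 lam \<theta> Xs Us * q2 T N \<Delta> \<gamma> p0 lam \<theta> Us U * q3 T N \<Delta> \<gamma> p0 lam \<theta> U X) /
             (q1 T N \<Delta> \<gamma> p0 lam \<theta> X U * q2 T N \<Delta> \<gamma> p0 lam \<theta> U Us * q3 T N \<Delta> \<gamma> p0 lam \<theta> Us Xs)))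
       = min 1 (lik S se sp Y Xs / lik S se sp Y X *
            (q2 T N \<Delta> \<gamma> p0 lam \<theta> Us U / q2 T N \<Delta> \<gamma> p0 lam \<theta> U Us))"
proof -
  interpret colonisation_model \<Delta> \<gamma> p0 lam \<theta> using assms(1-5) by unfold_locales
  have box_U: "in_box (bounds \<Delta> \<gamma> p0 lam \<theta> X t j) (U t j)" if "t \<le> T" "j < N" for t j
    using q1_pos_imp_in_box[OF assms(13) that] .
  have unit_U: "0 < U t j \<and> U t j < 1" if "t \<le> T" "j < N" for t j
    using in_box_imp_unit_interval[OF box_U[OF that]] by simp
  from assms(14) have q2_nonzero: "q2 T N \<Delta> \<gamma> p0 lam \<theta> U Us \<noteq> 0" by simp
  have unit_Us: "0 < Us t j \<and> Us t j < 1" if "t \<le> T" "j < N" for t j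
    using q2_nonzero_imp_unit_interval[where U = U and U' = Us, OF q2_nonzero unit_U that] .
  have box_Us: "in_box (bounds \<Delta> \<gamma> p0 lam \<theta> Xs t j) (Us t j)" if "t \<le> T" "j < N" for t j
    using fmap_in_box[where U = Us, OF that] unit_Us[OF that] unfolding assms(15) by simp
  have q3_U: "q3 T N \<Delta> \<gamma> p0 lam \<theta> U X = 1" and q3_Us: "q3 T N \<Delta> \<gamma> p0 lam \<theta> Us Xs = 1"
    using fmap_eq_if_in_box[OF assms(11) box_U] assms(15) by (simp_all add: q3_def)
  have q1_X: "q1 T N \<Delta> \<gamma> p0 lam \<theta> X U = 1 / prior T N \<Delta> \<gamma> p0 lam \<theta> X"
    by (rule q1_eq_inverse_prior) (rule box_U)
  have q1_Xs: "q1 T N \<Delta> \<gamma> p0 lam \<theta> Xs Us = 1 / prior T N \<Delta> \<gamma> p0 lam \<theta> Xs"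
    by (rule q1_eq_inverse_prior) (rule box_Us)
  have "lik S se sp Y X \<noteq> 0"
    using assms(12) by (auto simp: posterior_def)
  moreover have "prior T N \<Delta> \<gamma> p0 lam \<theta> X \<noteq> 0" "prior T N \<Delta> \<gamma> p0 lam \<theta> Xs \<noteq> 0"
    using prior_pos[of T N X] prior_pos[of T N Xs] by simp_all
  ultimately show ?thesis
    unfolding posterior_divide_posterior[OF assms(12)] q1_X q1_Xs q3_U q3_Us
    using q2_nonzero by (simp add: field_simps)
qed

end
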